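(* For every $\alpha>0$ there exist constants $K,\kappa>0$, depending only on $\alpha$, such that the following holds. For all $0<\beta\le1$, all $N,m\ge1$, and all strictly increasing $m$-tuples $p=(p_1<\dots<p_m)$ and $q=(q_1<\dots<q_m)$ of integers in $[1,N]$ with $|p-q|_1\ge\alpha N$, $$Z_\beta(p,q)\le(K/\beta)^{2m}e^{-\kappa\beta N}.$$
   Context: Here $|p-q|_1=\sum_a|p_a-q_a|$ and $$Z_\beta(p,q)=\sum_{\sigma\in S_m}e^{-\beta E_\sigma(p,q)},\qquad E_\sigma(p,q)=\sum_{a=1}^m|p_a-q_{\sigma(a)}|,$$ where $S_m$ is the symmetric group on $m$ elements. *)

theory Defs
  imports "HOL-Analysis.Analysis"
begin

text \<open>Tuples p = (p_1,...,p_m) are modelled as functions nat => int, indexed by {1..m}.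
  Permutations in S_m are the functions permuting {1..m}.\<close>

definition l1dist :: "nat \<Rightarrow> (nat \<Rightarrow> int) \<Rightarrow> (nat \<Rightarrow> int) \<Rightarrow> real" where
  "l1dist m p q = (\<Sum>a\<in>{1..m}. real_of_int \<bar>p a - q a\<bar>)"

definition energy :: "nat \<Rightarrow> (nat \<Rightarrow> int) \<Rightarrow> (nat \<Rightarrow> int) \<Rightarrow> (nat \<Rightarrow> nat) \<Rightarrow> real" where
  "energy m p q \<sigma> = (\<Sum>a\<in>{1..m}. real_of_int \<bar>p a - q (\<sigma> a)\<bar>)"

definition Zpart :: "real \<Rightarrow> nat \<Rightarrow> (nat \<Rightarrow> int) \<Rightarrow> (nat \<Rightarrow> int) \<Rightarrow> real" where
  "Zpart \<beta> m p q = (\<Sum>\<sigma>\<in>{\<sigma>. \<sigma> permutes {1..m}}. exp (- \<beta> * energy m p q \<sigma>))"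

end

theory Submission imports Defs begin

(* Write E(sigma) = sum_a |p_a - q_sigma(a)| and D = |p - q|_1.
   (1) Rearrangement: for nondecreasing p and q the identity permutation minimises
       the energy, i.e. D <= E(sigma) for every sigma.  This is proved by induction
       on m, uncrossing the pair of indices that sigma sends to / from the top index
       with a single transposition, which never increases the energy.
   (2) Split the Boltzmann weight in half:
         exp(-beta E) <= exp(-beta D/2) * prod_a exp(-(beta/2) |p_a - q_sigma(a)|).
   (3) Summing over permutations, the sum of products of matrix entries along
       permutations is at most the product of the row sums (a permanent bound).
   (4) Each row sum is a sum of exp(-gamma |x0 - x|) over distinct integers x, hence
       bounded by two geometric series: at most 2/(1 - exp(-gamma)) <= 4/gamma.
   Together, Z <= exp(-beta D/2) (8/beta)^m <= (8/beta)^(2m) exp(-(alpha/2) beta N),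
   so the theorem holds with K = 8 and kappa = alpha/2. *)

lemma abs_diff_uncross:
  fixes a b c d :: int
  assumes "a \<le> b" "c \<le> d"
  shows "\<bar>b - d\<bar> + \<bar>a - c\<bar> \<le> \<bar>b - c\<bar> + \<bar>a - d\<bar>"
  using assms by arith

lemma sum_differ_at_two_points:
  fixes u v :: "'a \<Rightarrow> 'b::ab_group_add"
  assumes "finite S" "k \<in> S" "M \<in> S" "k \<noteq> M"
    and "\<And>a. a \<in> S - {k, M} \<Longrightarrow> u a = v a"
  shows "sum u S - sum v S = (u k + u M) - (v k + v M)"
proof -
  have split: "sum w S = sum w (S - {k, M}) + (w k + w M)" for w :: "'a \<Rightarrow> 'b"
    using sum.subset_diff[of "{k, M}" S w] assms(1-4) by simp
  have "sum u (S - {k, M}) = sum v (S - {k, M})"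
    using assms(5) by (rule sum.cong[OF refl])
  then show ?thesis
    using split[of u] split[of v] by (simp add: algebra_simps)
qed

lemma energy_uncross:
  assumes \<sigma>: "\<sigma> permutes {1..m}" and a: "a \<in> {1..m}" and b: "b \<in> {1..m}"
    and p: "p a \<le> p b" and q: "q (\<sigma> b) \<le> q (\<sigma> a)"
  shows "energy m p q (Transposition.transpose (\<sigma> b) (\<sigma> a) \<circ> \<sigma>) \<le> energy m p q \<sigma>"
proof (cases "a = b")
  case True
  then show ?thesis by simp
next
  case False
  define \<tau> where "\<tau> = Transposition.transpose (\<sigma> b) (\<sigma> a) \<circ> \<sigma>"
  define f where "f = (\<lambda>x y. real_of_int \<bar>p x - q y\<bar>)"
  have inj\<sigma>: "\<sigma> x = \<sigma> y \<longleftrightarrow> x = y" for x y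
    using permutes_inj[OF \<sigma>] by (simp add: inj_eq)
  have \<tau>_rest: "\<tau> c = \<sigma> c" if "c \<in> {1..m} - {a, b}" for c
    using that by (simp add: \<tau>_def inj\<sigma> transpose_apply_other)
  have "energy m p q \<sigma> - energy m p q \<tau> = (f a (\<sigma> a) + f b (\<sigma> b)) - (f a (\<tau> a) + f b (\<tau> b))"
    unfolding energy_def f_def
    by (rule sum_differ_at_two_points[OF _ a b False]) (simp_all add: \<tau>_rest)
  also have "\<dots> = (f a (\<sigma> a) + f b (\<sigma> b)) - (f a (\<sigma> b) + f b (\<sigma> a))"
    by (simp add: \<tau>_def)
  also have "\<dots> \<ge> 0"
    using abs_diff_uncross[OF p q] unfolding f_def
    by (simp only: of_int_add[symmetric] of_int_le_iff diff_ge_0_iff_ge add.commute)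
  finally show ?thesis by (simp add: \<tau>_def)
qed

lemma energy_fix_top_index:
  assumes p: "mono_on {1..Suc n} p" and q: "mono_on {1..Suc n} q"
    and \<sigma>: "\<sigma> permutes {1..Suc n}"
  shows "\<exists>\<tau>. \<tau> permutes {1..n} \<and> energy (Suc n) p q \<tau> \<le> energy (Suc n) p q \<sigma>"
proof -
  let ?S = "{1..Suc n}"
  define k where "k = inv \<sigma> (Suc n)"
  define \<tau> where "\<tau> = Transposition.transpose (\<sigma> (Suc n)) (\<sigma> k) \<circ> \<sigma>"
  have top: "Suc n \<in> ?S" by simp
  have \<sigma>k: "\<sigma> k = Suc n" using permutes_inverses(1)[OF \<sigma>] by (simp add: k_def)
  have k: "k \<in> ?S" using permutes_in_image[OF \<sigma>, of k] top \<sigma>k by simp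
  have \<sigma>_top: "\<sigma> (Suc n) \<in> ?S" using permutes_in_image[OF \<sigma>] top by simp
  have "energy (Suc n) p q \<tau> \<le> energy (Suc n) p q \<sigma>"
    unfolding \<tau>_def
  proof (rule energy_uncross[OF \<sigma> k top])
    show "p k \<le> p (Suc n)" using mono_onD[OF p k top] k by simp
    show "q (\<sigma> (Suc n)) \<le> q (\<sigma> k)" using mono_onD[OF q \<sigma>_top top] \<sigma>_top \<sigma>k by simp
  qed
  moreover have "\<tau> permutes {1..n}"
  proof (rule permutes_superset)
    show "\<tau> permutes ?S"
      unfolding \<tau>_def by (rule permutes_compose[OF \<sigma> permutes_swap_id[OF \<sigma>_top]]) (simp add: \<sigma>k)
    show "\<tau> x = x" if "x \<in> ?S - {1..n}" for x
      using that \<sigma>k by (auto simp: \<tau>_def le_Suc_eq)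
  qed
  ultimately show ?thesis by blast
qed

lemma l1dist_le_energy:
  assumes "mono_on {1..m} p" "mono_on {1..m} q" "\<sigma> permutes {1..m}"
  shows "l1dist m p q \<le> energy m p q \<sigma>"
  using assms
proof (induction m arbitrary: \<sigma>)
  case 0
  then show ?case by (simp add: l1dist_def energy_def)
next
  case (Suc n)
  obtain \<tau> where \<tau>: "\<tau> permutes {1..n}"
    and le: "energy (Suc n) p q \<tau> \<le> energy (Suc n) p q \<sigma>"
    using energy_fix_top_index[OF Suc.prems] by blast
  have mono_n: "mono_on {1..n} p" "mono_on {1..n} q"
    using Suc.prems(1,2) by (auto intro: mono_on_subset)
  have "\<tau> (Suc n) = Suc n" using permutes_not_in[OF \<tau>] by simp
  then have "energy (Suc n) p q \<tau> = energy n p q \<tau> + real_of_int \<bar>p (Suc n) - q (Suc n)\<bar>"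
    by (simp add: energy_def)
  moreover have "l1dist (Suc n) p q = l1dist n p q + real_of_int \<bar>p (Suc n) - q (Suc n)\<bar>"
    by (simp add: l1dist_def)
  ultimately show ?case using Suc.IH[OF mono_n \<tau>] le by simp
qed

lemma sum_power_inj_le:
  fixes r :: real and h :: "'a \<Rightarrow> nat"
  assumes "0 \<le> r" "r < 1" "finite Q" "inj_on h Q"
  shows "(\<Sum>x\<in>Q. r ^ h x) \<le> 1 / (1 - r)"
proof -
  obtain L where L: "h ` Q \<subseteq> {..<L}"
    using finite_nat_bounded[OF finite_imageI[OF assms(3)]] by blast
  have "(\<Sum>x\<in>Q. r ^ h x) = (\<Sum>i\<in>h ` Q. r ^ i)"
    using sum.reindex[OF assms(4), of "\<lambda>i. r ^ i"] by simp
  also have "\<dots> \<le> (\<Sum>i<L. r ^ i)"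
    by (rule sum_mono2[OF _ L]) (auto simp: assms(1))
  also have "\<dots> = (1 - r ^ L) / (1 - r)"
    using sum_gp_strict[of r L] assms by simp
  also have "\<dots> \<le> 1 / (1 - r)"
    using assms by (intro divide_right_mono) auto
  finally show ?thesis .
qed

text \<open>Elementary estimate \<open>1 - e\<^sup>-\<^sup>\<gamma> \<ge> \<gamma>/(1+\<gamma>) \<ge> \<gamma>/2\<close> for \<open>0 < \<gamma> \<le> 1\<close>; it turns geometric
  series in \<open>e\<^sup>-\<^sup>\<gamma>\<close> into the \<open>1/\<gamma>\<close> factors of the theorem.\<close>

lemma one_minus_exp_neg_ge:
  fixes \<gamma> :: real
  assumes "0 < \<gamma>" "\<gamma> \<le> 1"
  shows "\<gamma> / 2 \<le> 1 - exp (- \<gamma>)"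
proof -
  have "exp (- \<gamma>) = 1 / exp \<gamma>" by (simp add: exp_minus field_simps)
  also have "\<dots> \<le> 1 / (1 + \<gamma>)"
    using assms by (intro divide_left_mono) auto
  finally have "\<gamma> / (1 + \<gamma>) \<le> 1 - exp (- \<gamma>)"
    using assms by (simp add: field_simps)
  moreover have "\<gamma> / 2 \<le> \<gamma> / (1 + \<gamma>)"
    using assms by (intro divide_left_mono) auto
  ultimately show ?thesis by linarith
qed

lemma exp_decay_sum_above:
  fixes \<gamma> :: real and Q :: "int set"
  assumes "0 < \<gamma>" "finite Q" "\<forall>x\<in>Q. x0 \<le> x"
  shows "(\<Sum>x\<in>Q. exp (- \<gamma> * real_of_int \<bar>x0 - x\<bar>)) \<le> 1 / (1 - exp (- \<gamma>))"
proof -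
  have "exp (- \<gamma> * real_of_int \<bar>x0 - x\<bar>) = exp (- \<gamma>) ^ nat (x - x0)" if "x \<in> Q" for x
  proof -
    have "real_of_int \<bar>x0 - x\<bar> = real (nat (x - x0))" using assms(3) that by auto
    then show ?thesis by (simp add: exp_of_nat_mult[symmetric] mult.commute)
  qed
  then have "(\<Sum>x\<in>Q. exp (- \<gamma> * real_of_int \<bar>x0 - x\<bar>)) = (\<Sum>x\<in>Q. exp (- \<gamma>) ^ nat (x - x0))"
    by simp
  also have "\<dots> \<le> 1 / (1 - exp (- \<gamma>))"
  proof (rule sum_power_inj_le[OF _ _ assms(2)])
    show "inj_on (\<lambda>x. nat (x - x0)) Q"
      using assms(3) by (intro inj_onI) (metis diff_add_cancel eq_nat_nat_iff diff_ge_0_iff_ge)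
  qed (use assms(1) in auto)
  finally show ?thesis .
qed

text \<open>Two-sided version: reflecting the points below \<open>x\<^sub>0\<close> reduces to the one-sided bound.\<close>

lemma exp_decay_sum:
  fixes \<gamma> :: real and Q :: "int set"
  assumes "0 < \<gamma>" "finite Q"
  shows "(\<Sum>x\<in>Q. exp (- \<gamma> * real_of_int \<bar>x0 - x\<bar>)) \<le> 2 / (1 - exp (- \<gamma>))"
proof -
  let ?w = "\<lambda>c x. exp (- \<gamma> * real_of_int \<bar>c - x\<bar>)"
  define A where "A = {x\<in>Q. x0 \<le> x}"
  define B where "B = {x\<in>Q. x < x0}"
  have "(\<Sum>x\<in>B. ?w x0 x) = (\<Sum>y\<in>uminus ` B. ?w (- x0) y)"
    by (subst sum.reindex) (auto simp: inj_on_def abs_minus_commute)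
  also have "\<dots> \<le> 1 / (1 - exp (- \<gamma>))"
    by (rule exp_decay_sum_above) (use assms in \<open>auto simp: B_def\<close>)
  finally have lower: "(\<Sum>x\<in>B. ?w x0 x) \<le> 1 / (1 - exp (- \<gamma>))" .
  have upper: "(\<Sum>x\<in>A. ?w x0 x) \<le> 1 / (1 - exp (- \<gamma>))"
    by (rule exp_decay_sum_above) (use assms in \<open>auto simp: A_def\<close>)
  have "(\<Sum>x\<in>Q. ?w x0 x) = (\<Sum>x\<in>A. ?w x0 x) + (\<Sum>x\<in>B. ?w x0 x)"
    unfolding A_def B_def using assms(2) by (subst sum.union_disjoint[symmetric]) (auto intro: sum.cong)
  then show ?thesis using lower upper by simp
qed

text \<open>Permanent bound: for a nonnegative matrix, the sum over permutations of the products
  along the permutation is at most the product of the row sums, since expanding the latter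
  gives the sum over all maps \<open>S \<rightarrow> S\<close>.\<close>

lemma permutation_sum_le_prod_row_sums:
  fixes g :: "'a \<Rightarrow> 'a \<Rightarrow> real"
  assumes "finite S" "\<And>a b. a \<in> S \<Longrightarrow> b \<in> S \<Longrightarrow> 0 \<le> g a b"
  shows "(\<Sum>\<sigma>\<in>{\<sigma>. \<sigma> permutes S}. \<Prod>a\<in>S. g a (\<sigma> a)) \<le> (\<Prod>a\<in>S. \<Sum>b\<in>S. g a b)"
proof -
  let ?P = "{\<sigma>. \<sigma> permutes S}"
  let ?F = "\<lambda>f. \<Prod>a\<in>S. g a (f a)"
  have inj: "inj_on (\<lambda>\<sigma>. restrict \<sigma> S) ?P"
  proof (rule inj_onI)
    fix s t assume "s \<in> ?P" "t \<in> ?P" and e: "restrict s S = restrict t S"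
    then show "s = t"
      by (intro ext) (metis CollectD permutes_not_in restrict_apply')
  qed
  have image: "(\<lambda>\<sigma>. restrict \<sigma> S) ` ?P \<subseteq> PiE S (\<lambda>_. S)"
    by (auto simp: permutes_in_image)
  have "(\<Sum>\<sigma>\<in>?P. ?F \<sigma>) = (\<Sum>\<sigma>\<in>?P. ?F (restrict \<sigma> S))"
    by (intro sum.cong refl prod.cong) auto
  also have "\<dots> = (\<Sum>f\<in>(\<lambda>\<sigma>. restrict \<sigma> S) ` ?P. ?F f)"
    using sum.reindex[OF inj, of ?F] by simp
  also have "\<dots> \<le> (\<Sum>f\<in>PiE S (\<lambda>_. S). ?F f)"
    by (rule sum_mono2[OF _ image]) (use assms in \<open>auto simp: finite_PiE PiE_iff intro: prod_nonneg\<close>)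
  also have "\<dots> = (\<Prod>a\<in>S. \<Sum>b\<in>S. g a b)"
    by (rule prod_sum_PiE[symmetric]) (use assms in auto)
  finally show ?thesis .
qed

lemma boltzmann_weight_split:
  assumes "0 < \<beta>" "D \<le> energy m p q \<sigma>"
  shows "exp (- \<beta> * energy m p q \<sigma>)
    \<le> exp (- \<beta> * D / 2) * (\<Prod>a\<in>{1..m}. exp (- (\<beta> / 2) * real_of_int \<bar>p a - q (\<sigma> a)\<bar>))"
proof -
  have "- \<beta> * energy m p q \<sigma> \<le> - \<beta> * D / 2 + - (\<beta> / 2) * energy m p q \<sigma>"
    using assms by (simp add: algebra_simps mult_left_mono)
  then have "exp (- \<beta> * energy m p q \<sigma>) \<le> exp (- \<beta> * D / 2) * exp (- (\<beta> / 2) * energy m p q \<sigma>)"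
    by (simp flip: exp_add)
  also have "exp (- (\<beta> / 2) * energy m p q \<sigma>)
      = (\<Prod>a\<in>{1..m}. exp (- (\<beta> / 2) * real_of_int \<bar>p a - q (\<sigma> a)\<bar>))"
    by (simp add: energy_def sum_distrib_left exp_sum)
  finally show ?thesis .
qed

lemma Zpart_le:
  assumes \<beta>: "0 < \<beta>" "\<beta> \<le> 1"
    and p: "mono_on {1..m} p" and q: "strict_mono_on {1..m} q"
    and D: "D \<le> l1dist m p q"
  shows "Zpart \<beta> m p q \<le> exp (- \<beta> * D / 2) * (8 / \<beta>) ^ m"
proof -
  let ?S = "{1..m}"
  define g where "g = (\<lambda>a b. exp (- (\<beta> / 2) * real_of_int \<bar>p a - q b\<bar>))"
  have row: "(\<Sum>b\<in>?S. g a b) \<le> 8 / \<beta>" for a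
  proof -
    have "(\<Sum>b\<in>?S. g a b) = (\<Sum>x\<in>q ` ?S. exp (- (\<beta> / 2) * real_of_int \<bar>p a - x\<bar>))"
      using sum.reindex[OF strict_mono_on_imp_inj_on[OF q],
          of "\<lambda>x. exp (- (\<beta> / 2) * real_of_int \<bar>p a - x\<bar>)"]
      by (simp add: g_def)
    also have "\<dots> \<le> 2 / (1 - exp (- (\<beta> / 2)))"
      by (rule exp_decay_sum) (use \<beta> in auto)
    also have "\<dots> \<le> 2 / (\<beta> / 4)"
      using one_minus_exp_neg_ge[of "\<beta> / 2"] \<beta> by (intro divide_left_mono) auto
    finally show ?thesis by simp
  qed
  have weight: "exp (- \<beta> * energy m p q \<sigma>) \<le> exp (- \<beta> * D / 2) * (\<Prod>a\<in>?S. g a (\<sigma> a))"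
    if "\<sigma> permutes ?S" for \<sigma>
  proof -
    have "D \<le> energy m p q \<sigma>"
      using D l1dist_le_energy[OF p strict_mono_on_imp_mono_on[OF q] that] by linarith
    then show ?thesis unfolding g_def by (rule boltzmann_weight_split[OF \<beta>(1)])
  qed
  have "Zpart \<beta> m p q \<le> (\<Sum>\<sigma>\<in>{\<sigma>. \<sigma> permutes ?S}. exp (- \<beta> * D / 2) * (\<Prod>a\<in>?S. g a (\<sigma> a)))"
    unfolding Zpart_def using weight by (intro sum_mono) blast
  also have "\<dots> = exp (- \<beta> * D / 2) * (\<Sum>\<sigma>\<in>{\<sigma>. \<sigma> permutes ?S}. \<Prod>a\<in>?S. g a (\<sigma> a))"
    by (rule sum_distrib_left[symmetric])
  also have "\<dots> \<le> exp (- \<beta> * D / 2) * (\<Prod>a\<in>?S. \<Sum>b\<in>?S. g a b)"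
    by (intro mult_left_mono permutation_sum_le_prod_row_sums) (auto simp: g_def)
  also have "\<dots> \<le> exp (- \<beta> * D / 2) * (\<Prod>a\<in>?S. 8 / \<beta>)"
    by (intro mult_left_mono prod_mono conjI sum_nonneg row) (auto simp: g_def)
  also have "\<dots> = exp (- \<beta> * D / 2) * (8 / \<beta>) ^ m"
    by simp
  finally show ?thesis .
qed

theorem mainTheorem12:
  fixes \<alpha> :: real
  assumes "\<alpha> > 0"
  shows "\<exists>K \<kappa> :: real. K > 0 \<and> \<kappa> > 0 \<and>
    (\<forall>(\<beta>::real) (N::nat) (m::nat) (p::nat \<Rightarrow> int) (q::nat \<Rightarrow> int).
       0 < \<beta> \<longrightarrow> \<beta> \<le> 1 \<longrightarrow> N \<ge> 1 \<longrightarrow> m \<ge> 1 \<longrightarrow>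
       strict_mono_on {1..m} p \<longrightarrow> strict_mono_on {1..m} q \<longrightarrow>
       (\<forall>a\<in>{1..m}. 1 \<le> p a \<and> p a \<le> int N \<and> 1 \<le> q a \<and> q a \<le> int N) \<longrightarrow>
       l1dist m p q \<ge> \<alpha> * real N \<longrightarrow>
       Zpart \<beta> m p q \<le> (K / \<beta>) ^ (2 * m) * exp (- \<kappa> * \<beta> * real N))"
proof (rule exI[of _ 8], rule exI[of _ "\<alpha> / 2"], intro conjI allI impI)
  show "(0::real) < 8" "0 < \<alpha> / 2" using assms by simp_all
  fix \<beta> :: real and N m :: nat and p q :: "nat \<Rightarrow> int"
  assume \<beta>: "0 < \<beta>" "\<beta> \<le> 1"
    and p: "strict_mono_on {1..m} p" and q: "strict_mono_on {1..m} q"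
    and dist: "l1dist m p q \<ge> \<alpha> * real N"
  have "Zpart \<beta> m p q \<le> exp (- \<beta> * (\<alpha> * real N) / 2) * (8 / \<beta>) ^ m"
    using Zpart_le[OF \<beta> strict_mono_on_imp_mono_on[OF p] q dist] .
  also have "\<dots> \<le> exp (- \<beta> * (\<alpha> * real N) / 2) * (8 / \<beta>) ^ (2 * m)"
    using \<beta> by (intro mult_left_mono power_increasing) auto
  also have "- \<beta> * (\<alpha> * real N) / 2 = - (\<alpha> / 2) * \<beta> * real N"
    by (simp add: field_simps)
  finally show "Zpart \<beta> m p q \<le> (8 / \<beta>) ^ (2 * m) * exp (- (\<alpha> / 2) * \<beta> * real N)"
    by (simp only: mult.commute)
qed

end
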